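(* If a propositional logic $\mathbf{L}$ is decidable, then it has an effective sequential approximation.
   Context: A propositional language $\mathcal{L}$ has variables $X_1,X_2,\ldots$ and finitely many connectives with arities; $\mathrm{Frm}(\mathcal{L})$ is the set of formulas. A propositional logic is a set $\mathbf{L}\subseteq\mathrm{Frm}(\mathcal{L})$ closed under substitution of formulas for variables. A finite-valued logic $\mathbf{M}$ is given by a finite set $V(\mathbf{M})$ of truth values, designated values $V^+(\mathbf{M})\subseteq V(\mathbf{M})$, and a truth function for each connective; valuations map variables to truth values and extend to formulas; a tautology is a formula designated under every valuation; $\mathrm{Taut}(\mathbf{M})$ is the set of tautologies; $\mathbf{M}_1\unlhd\mathbf{M}_2$ means $\mathrm{Taut}(\mathbf{M}_1)\subseteq\mathrm{Taut}(\mathbf{M}_2)$. A sequential approximation of $\mathbf{L}$ is a sequence $\langle\mathbf{M}_1,\mathbf{M}_2,\ldots\rangle$ of finite-valued logics over $\mathcal{L}$ such that $\mathbf{M}_i\unlhd\mathbf{M}_j$ whenever $i\ge j$, and $\mathbf{L}=\bigcap_j\mathrm{Taut}(\mathbf{M}_j)$. It is effective if the sequence is effectively enumerated (there is an algorithm producing, given $i$, the finite description of $\mathbf{M}_i$). *)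

theory Defs
  imports Main "HOL-Library.Nat_Bijection"
begin

datatype recf = Z | S | Id nat | Cn recf "recf list" | Pr recf recf | Mn recf

inductive rec_eval :: "recf \<Rightarrow> nat list \<Rightarrow> nat \<Rightarrow> bool" where
  ev_Z:  "rec_eval Z xs 0"
| ev_S:  "rec_eval S (x # xs) (Suc x)"
| ev_Id: "i < length xs \<Longrightarrow> rec_eval (Id i) xs (xs ! i)"
| ev_Cn: "length ys = length gs \<Longrightarrow> (\<forall>k < length gs. rec_eval (gs ! k) xs (ys ! k))
          \<Longrightarrow> rec_eval f ys z \<Longrightarrow> rec_eval (Cn f gs) xs z"
| ev_Pr0: "rec_eval g xs y \<Longrightarrow> rec_eval (Pr g h) (0 # xs) y"
| ev_PrS: "rec_eval (Pr g h) (n # xs) y \<Longrightarrow> rec_eval h (n # y # xs) z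
          \<Longrightarrow> rec_eval (Pr g h) (Suc n # xs) z"
| ev_Mn: "rec_eval f (n # xs) 0 \<Longrightarrow> (\<forall>m < n. \<exists>k. rec_eval f (m # xs) (Suc k))
          \<Longrightarrow> rec_eval (Mn f) xs n"

text \<open>A total unary function on nat is computable if it is (total) recursive.
Functions of several arguments are handled via the Cantor pairing prod_encode.\<close>
definition computable :: "(nat \<Rightarrow> nat) \<Rightarrow> bool" where
  "computable f \<longleftrightarrow> (\<exists>r. \<forall>x. rec_eval r [x] (f x))"

definition decidable_set :: "nat set \<Rightarrow> bool" where
  "decidable_set A \<longleftrightarrow> computable (\<lambda>x. if x \<in> A then 1 else 0)"

text \<open>A language is given by a list ar of arities: connective c (c < length ar)
has arity ar ! c. Variables X_1, X_2, ... are Var 0, Var 1, ...\<close>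
datatype frm = Var nat | App nat "frm list"

fun wf_frm :: "nat list \<Rightarrow> frm \<Rightarrow> bool" where
  "wf_frm ar (Var i) = True"
| "wf_frm ar (App c fs) = (c < length ar \<and> length fs = ar ! c \<and> (\<forall>f \<in> set fs. wf_frm ar f))"

definition Frm :: "nat list \<Rightarrow> frm set" where
  "Frm ar = {\<phi>. wf_frm ar \<phi>}"

fun subst :: "(nat \<Rightarrow> frm) \<Rightarrow> frm \<Rightarrow> frm" where
  "subst \<sigma> (Var i) = \<sigma> i"
| "subst \<sigma> (App c fs) = App c (map (subst \<sigma>) fs)"

definition is_logic :: "nat list \<Rightarrow> frm set \<Rightarrow> bool" where
  "is_logic ar L \<longleftrightarrow> L \<subseteq> Frm ar \<and>
     (\<forall>\<sigma> \<phi>. (\<forall>i. \<sigma> i \<in> Frm ar) \<longrightarrow> \<phi> \<in> L \<longrightarrow> subst \<sigma> \<phi> \<in> L)"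

fun frm_code :: "frm \<Rightarrow> nat" where
  "frm_code (Var i) = prod_encode (0, i)"
| "frm_code (App c fs) = prod_encode (Suc c, list_encode (map frm_code fs))"

definition decidable_logic :: "frm set \<Rightarrow> bool" where
  "decidable_logic L \<longleftrightarrow> decidable_set (frm_code ` L)"

text \<open>Truth values are 0, ..., nvals M - 1.\<close>
record fmatrix =
  nvals :: nat
  desig :: "nat set"
  tfun  :: "nat \<Rightarrow> nat list \<Rightarrow> nat"

definition is_matrix :: "nat list \<Rightarrow> fmatrix \<Rightarrow> bool" where
  "is_matrix ar M \<longleftrightarrow> 0 < nvals M \<and> desig M \<subseteq> {..<nvals M} \<and>
     (\<forall>c < length ar. \<forall>vs. length vs = ar ! c \<and> set vs \<subseteq> {..<nvals M}
         \<longrightarrow> tfun M c vs < nvals M)"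

fun val :: "fmatrix \<Rightarrow> (nat \<Rightarrow> nat) \<Rightarrow> frm \<Rightarrow> nat" where
  "val M v (Var i) = v i"
| "val M v (App c fs) = tfun M c (map (val M v) fs)"

definition Taut :: "nat list \<Rightarrow> fmatrix \<Rightarrow> frm set" where
  "Taut ar M = {\<phi> \<in> Frm ar. \<forall>v. (\<forall>i. v i < nvals M) \<longrightarrow> val M v \<phi> \<in> desig M}"

text \<open>Sequential approximation (indices start at 0 instead of 1).\<close>
definition seq_approx :: "nat list \<Rightarrow> frm set \<Rightarrow> (nat \<Rightarrow> fmatrix) \<Rightarrow> bool" where
  "seq_approx ar L Ms \<longleftrightarrow> (\<forall>j. is_matrix ar (Ms j)) \<and>
     (\<forall>i j. j \<le> i \<longrightarrow> Taut ar (Ms i) \<subseteq> Taut ar (Ms j)) \<and>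
     L = (\<Inter>j. Taut ar (Ms j))"

text \<open>Effective enumeration: the finite description of Ms i (number of values,
designated values, truth tables) is uniformly computable from i.\<close>
definition effective_seq :: "nat list \<Rightarrow> (nat \<Rightarrow> fmatrix) \<Rightarrow> bool" where
  "effective_seq ar Ms \<longleftrightarrow>
     computable (\<lambda>i. nvals (Ms i)) \<and>
     computable (\<lambda>p. if snd (prod_decode p) \<in> desig (Ms (fst (prod_decode p))) then 1 else 0) \<and>
     (\<exists>g. computable g \<and>
        (\<forall>i c vs. c < length ar \<and> length vs = ar ! c \<and> set vs \<subseteq> {..<nvals (Ms i)}
           \<longrightarrow> g (prod_encode (i, prod_encode (c, list_encode vs))) = tfun (Ms i) c vs))"

end

(*
  The n-th matrix has the truth values 0, ..., n. The codes below n of well-formed formulas are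
  the proper values, all other values are junk. A connective maps its arguments to the code of
  the compound formula built from them if that code is proper, and to the junk value n otherwise;
  a value is designated unless it is proper and not the code of a formula of L.
  Every formula then evaluates either to junk or to the code of one of its substitution
  instances, so a logic closed under substitution consists of tautologies of every matrix.
  Conversely, the valuation sending each variable to its own code evaluates a formula with code
  below n to its own code, so a formula outside L fails in every matrix beyond its code.
  Enlarging n only turns junk into proper values, hence the tautologies decrease; and the
  sequence is effective because L is decidable and well-formedness of codes is decidable by
  course-of-values recursion.
*)

theory Submission
  imports Defs
begin

section \<open>Total recursive functions\<close>

definition recursive :: "nat \<Rightarrow> (nat list \<Rightarrow> nat) \<Rightarrow> bool" where
  "recursive n f \<longleftrightarrow> (\<exists>r. \<forall>xs. length xs = n \<longrightarrow> rec_eval r xs (f xs))"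

definition decidable_pred :: "nat \<Rightarrow> (nat list \<Rightarrow> bool) \<Rightarrow> bool" where
  "decidable_pred n P \<longleftrightarrow> recursive n (\<lambda>xs. if P xs then 1 else 0)"

lemma recursive_cong:
  "recursive n f \<Longrightarrow> (\<And>xs. length xs = n \<Longrightarrow> f xs = g xs) \<Longrightarrow> recursive n g"
  unfolding recursive_def by metis

lemma decidable_pred_cong:
  "decidable_pred n P \<Longrightarrow> (\<And>xs. length xs = n \<Longrightarrow> P xs \<longleftrightarrow> Q xs) \<Longrightarrow> decidable_pred n Q"
  unfolding decidable_pred_def by (erule recursive_cong) simp

lemma recursive_zero: "recursive n (\<lambda>_. 0)"
  unfolding recursive_def using ev_Z by blast

lemma recursive_proj: "i < n \<Longrightarrow> recursive n (\<lambda>xs. xs ! i)"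
  unfolding recursive_def using ev_Id by metis

lemma recursive_Suc_proj: "recursive 1 (\<lambda>xs. Suc (xs ! 0))"
  unfolding recursive_def by (rule exI[of _ S]) (auto simp: length_Suc_conv intro: ev_S)

lemma recursive_comp:
  assumes "recursive m f" "length gs = m" "\<forall>g\<in>set gs. recursive n g"
  shows "recursive n (\<lambda>xs. f (map (\<lambda>g. g xs) gs))"
proof -
  obtain rf where rf: "\<forall>ys. length ys = m \<longrightarrow> rec_eval rf ys (f ys)"
    using assms(1) recursive_def by blast
  have "\<forall>k<length gs. \<exists>r. \<forall>xs. length xs = n \<longrightarrow> rec_eval r xs ((gs ! k) xs)"
    using assms(3) unfolding recursive_def by auto
  then obtain R where R: "\<forall>k<length gs. \<forall>xs. length xs = n \<longrightarrow> rec_eval (R k) xs ((gs ! k) xs)"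
    by metis
  show ?thesis unfolding recursive_def
  proof (intro exI allI impI)
    fix xs :: "nat list" assume "length xs = n"
    then show "rec_eval (Cn rf (map R [0..<length gs])) xs (f (map (\<lambda>g. g xs) gs))"
      using rf R assms(2) by (intro ev_Cn[where ys="map (\<lambda>g. g xs) gs"]) auto
  qed
qed

lemma recursive_comp1: "recursive 1 f \<Longrightarrow> recursive n g \<Longrightarrow> recursive n (\<lambda>xs. f [g xs])"
  using recursive_comp[of 1 f "[g]" n] by simp

lemma recursive_comp2:
  "recursive 2 f \<Longrightarrow> recursive n g \<Longrightarrow> recursive n h \<Longrightarrow> recursive n (\<lambda>xs. f [g xs, h xs])"
  using recursive_comp[of 2 f "[g, h]" n] by simp

lemma recursive_Suc: "recursive n f \<Longrightarrow> recursive n (\<lambda>xs. Suc (f xs))"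
  using recursive_comp1[OF recursive_Suc_proj] by simp

lemma recursive_const: "recursive n (\<lambda>_. k)"
  by (induction k) (auto intro: recursive_zero recursive_Suc)

lemma recursive_tl:
  assumes "recursive n f"
  shows "recursive (Suc n) (\<lambda>xs. f (tl xs))"
proof -
  have "recursive (Suc n) (\<lambda>xs. f (map (\<lambda>g. g xs) (map (\<lambda>i xs. xs ! Suc i) [0..<n])))"
    using assms by (rule recursive_comp) (auto intro: recursive_proj)
  then show ?thesis
    by (rule recursive_cong) (auto intro!: arg_cong[where f=f] nth_equalityI simp: nth_tl)
qed

lemma recursive_prim_rec1:
  assumes "recursive 2 (\<lambda>xs. h (xs ! 0) (xs ! 1))"
    and "\<And>a. f (Suc a) = h a (f a)"
  shows "recursive 1 (\<lambda>xs. f (xs ! 0))"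
proof -
  obtain rg where rg: "rec_eval rg [] (f 0)"
    using recursive_const[of 0 "f 0"] unfolding recursive_def by auto
  obtain rh where rh2: "\<forall>xs. length xs = 2 \<longrightarrow> rec_eval rh xs (h (xs ! 0) (xs ! 1))"
    using assms(1) unfolding recursive_def by blast
  have rh: "rec_eval rh [a, r] (h a r)" for a r
    using rh2[rule_format, of "[a, r]"] by simp
  have "rec_eval (Pr rg rh) [a] (f a)" for a
    by (induction a) (auto simp: assms(2) intro: rg rh ev_Pr0 ev_PrS)
  then show ?thesis
    unfolding recursive_def by (intro exI[of _ "Pr rg rh"]) (auto simp: length_Suc_conv)
qed

lemma recursive_prim_rec2:
  assumes "recursive 1 (\<lambda>xs. f 0 (xs ! 0))"
    and "recursive 3 (\<lambda>xs. h (xs ! 0) (xs ! 1) (xs ! 2))"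
    and "\<And>a y. f (Suc a) y = h a (f a y) y"
  shows "recursive 2 (\<lambda>xs. f (xs ! 0) (xs ! 1))"
proof -
  obtain rg where rg1: "\<forall>xs. length xs = 1 \<longrightarrow> rec_eval rg xs (f 0 (xs ! 0))"
    using assms(1) unfolding recursive_def by blast
  have rg: "rec_eval rg [y] (f 0 y)" for y
    using rg1[rule_format, of "[y]"] by simp
  obtain rh where rh3: "\<forall>xs. length xs = 3 \<longrightarrow> rec_eval rh xs (h (xs ! 0) (xs ! 1) (xs ! 2))"
    using assms(2) unfolding recursive_def by blast
  have rh: "rec_eval rh [a, r, y] (h a r y)" for a r y
    using rh3[rule_format, of "[a, r, y]"] by simp
  have "rec_eval (Pr rg rh) [a, y] (f a y)" for a y
    by (induction a) (auto simp: assms(3) intro: rg rh ev_Pr0 ev_PrS)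
  then show ?thesis
    unfolding recursive_def by (intro exI[of _ "Pr rg rh"]) (auto simp: length_Suc_conv numeral_2_eq_2)
qed

lemma recursive_add:
  assumes "recursive n f" "recursive n g"
  shows "recursive n (\<lambda>xs. f xs + g xs)"
proof -
  have "recursive 2 (\<lambda>xs. xs ! 0 + xs ! 1)"
    by (rule recursive_prim_rec2[where f="(+)" and h="\<lambda>a r y. Suc r"])
       (auto intro!: recursive_proj recursive_Suc)
  from recursive_comp2[OF this assms] show ?thesis by simp
qed

lemma recursive_mult:
  assumes "recursive n f" "recursive n g"
  shows "recursive n (\<lambda>xs. f xs * g xs)"
proof -
  have "recursive 2 (\<lambda>xs. xs ! 0 * xs ! 1)"
    by (rule recursive_prim_rec2[where f="(*)" and h="\<lambda>a r y. r + y"])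
       (auto intro!: recursive_proj recursive_add recursive_zero)
  from recursive_comp2[OF this assms] show ?thesis by simp
qed

lemma recursive_power:
  assumes "recursive n f" "recursive n g"
  shows "recursive n (\<lambda>xs. f xs ^ g xs)"
proof -
  have "recursive 2 (\<lambda>xs. xs ! 1 ^ xs ! 0)"
    by (rule recursive_prim_rec2[where f="\<lambda>a y. y ^ a" and h="\<lambda>a r y. r * y"])
       (auto intro!: recursive_proj recursive_mult recursive_const simp: mult.commute)
  from recursive_comp2[OF this assms(2,1)] show ?thesis by simp
qed

lemma recursive_minus_1:
  assumes "recursive n f"
  shows "recursive n (\<lambda>xs. f xs - 1)"
proof -
  have "recursive 1 (\<lambda>xs. xs ! 0 - 1)"
    by (rule recursive_prim_rec1[where f="\<lambda>a. a - 1" and h="\<lambda>a r. a"]) (auto intro: recursive_proj)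
  from recursive_comp1[OF this assms] show ?thesis by simp
qed

lemma recursive_minus:
  assumes "recursive n f" "recursive n g"
  shows "recursive n (\<lambda>xs. f xs - g xs)"
proof -
  have "recursive 3 (\<lambda>xs. xs ! 1 - 1)"
    by (intro recursive_minus_1 recursive_proj) simp
  then have "recursive 2 (\<lambda>xs. xs ! 1 - xs ! 0)"
    by (intro recursive_prim_rec2[where f="\<lambda>a y. y - a" and h="\<lambda>a r y. r - 1"])
       (auto intro: recursive_proj)
  from recursive_comp2[OF this assms(2,1)] show ?thesis by simp
qed

lemma decidable_pred_less:
  "recursive n f \<Longrightarrow> recursive n g \<Longrightarrow> decidable_pred n (\<lambda>xs. f xs < g xs)"
  unfolding decidable_pred_def
  by (rule recursive_cong[where f="\<lambda>xs. 1 - (1 - (g xs - f xs))"])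
     (auto intro!: recursive_minus recursive_const)

lemma decidable_pred_eq:
  "recursive n f \<Longrightarrow> recursive n g \<Longrightarrow> decidable_pred n (\<lambda>xs. f xs = g xs)"
  unfolding decidable_pred_def
  by (rule recursive_cong[where f="\<lambda>xs. 1 - ((f xs - g xs) + (g xs - f xs))"])
     (auto intro!: recursive_minus recursive_add recursive_const)

lemma decidable_pred_not: "decidable_pred n P \<Longrightarrow> decidable_pred n (\<lambda>xs. \<not> P xs)"
  unfolding decidable_pred_def
  by (rule recursive_cong[where f="\<lambda>xs. 1 - (if P xs then 1 else 0)"])
     (auto intro!: recursive_minus recursive_const)

lemma decidable_pred_conj:
  "decidable_pred n P \<Longrightarrow> decidable_pred n Q \<Longrightarrow> decidable_pred n (\<lambda>xs. P xs \<and> Q xs)"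
  unfolding decidable_pred_def
  by (rule recursive_cong[where f="\<lambda>xs. (if P xs then 1 else 0) * (if Q xs then 1 else 0)"])
     (auto intro!: recursive_mult)

lemma decidable_pred_disj:
  "decidable_pred n P \<Longrightarrow> decidable_pred n Q \<Longrightarrow> decidable_pred n (\<lambda>xs. P xs \<or> Q xs)"
  using decidable_pred_not[OF decidable_pred_conj[OF decidable_pred_not decidable_pred_not]]
  by simp

lemma decidable_pred_imp:
  "decidable_pred n P \<Longrightarrow> decidable_pred n Q \<Longrightarrow> decidable_pred n (\<lambda>xs. P xs \<longrightarrow> Q xs)"
  using decidable_pred_disj[OF decidable_pred_not] by simp

lemma recursive_if:
  "decidable_pred n P \<Longrightarrow> recursive n f \<Longrightarrow> recursive n g
    \<Longrightarrow> recursive n (\<lambda>xs. if P xs then f xs else g xs)"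
  unfolding decidable_pred_def
  by (rule recursive_cong[where f="\<lambda>xs. (if P xs then 1 else 0) * f xs + (1 - (if P xs then 1 else 0)) * g xs"])
     (auto intro!: recursive_mult recursive_add recursive_minus recursive_const)

lemma recursive_Least:
  assumes "decidable_pred (Suc n) P" and "\<And>xs. length xs = n \<Longrightarrow> \<exists>y. P (y # xs)"
  shows "recursive n (\<lambda>xs. LEAST y. P (y # xs))"
proof -
  obtain r where r: "\<forall>ys. length ys = Suc n \<longrightarrow> rec_eval r ys (if \<not> P ys then 1 else 0)"
    using decidable_pred_not[OF assms(1)] unfolding decidable_pred_def recursive_def by blast
  show ?thesis unfolding recursive_def
  proof (intro exI allI impI)
    fix xs :: "nat list" assume xs: "length xs = n"
    define N where "N = (LEAST y. P (y # xs))"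
    have "P (N # xs)"
      unfolding N_def using assms(2)[OF xs] by (rule LeastI_ex)
    then have "rec_eval r (N # xs) 0"
      using r[rule_format, of "N # xs"] xs by simp
    moreover have "rec_eval r (m # xs) (Suc 0)" if "m < N" for m
      using r[rule_format, of "m # xs"] xs not_less_Least[OF that[unfolded N_def]] by simp
    ultimately show "rec_eval (Mn r) xs N"
      by (intro ev_Mn) auto
  qed
qed

lemma recursive_div:
  assumes "recursive n f" "recursive n g"
  shows "recursive n (\<lambda>xs. f xs div g xs)"
proof -
  have "decidable_pred (Suc n) (\<lambda>ys. g (tl ys) = 0 \<or> f (tl ys) < g (tl ys) * Suc (ys ! 0))"
    by (intro decidable_pred_disj decidable_pred_less decidable_pred_eq recursive_mult
        recursive_Suc recursive_tl assms recursive_proj recursive_const) simp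
  moreover have "\<exists>q. g xs = 0 \<or> f xs < g xs * Suc q" for xs
    by (rule exI[of _ "f xs"]) (cases "g xs", auto)
  \<comment> \<open>for \<open>g xs = 0\<close> the search stops at 0, in accordance with \<open>x div 0 = 0\<close>\<close>
  ultimately have "recursive n (\<lambda>xs. LEAST q. g xs = 0 \<or> f xs < g xs * Suc q)"
    using recursive_Least[where P="\<lambda>ys. g (tl ys) = 0 \<or> f (tl ys) < g (tl ys) * Suc (ys ! 0)"]
    by (simp only: list.sel nth_Cons_0)
  then show ?thesis
  proof (rule recursive_cong)
    fix xs :: "nat list"
    show "(LEAST q. g xs = 0 \<or> f xs < g xs * Suc q) = f xs div g xs"
    proof (cases "g xs = 0")
      case False
      show ?thesis
      proof (rule Least_equality)
        show "g xs = 0 \<or> f xs < g xs * Suc (f xs div g xs)"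
          using False dividend_less_times_div by simp
        fix q assume "g xs = 0 \<or> f xs < g xs * Suc q"
        then have "f xs < Suc q * g xs"
          using False by (simp add: mult.commute)
        then show "f xs div g xs \<le> q"
          using less_mult_imp_div_less less_Suc_eq_le by blast
      qed
    qed simp
  qed
qed

lemma recursive_mod:
  assumes "recursive n f" "recursive n g"
  shows "recursive n (\<lambda>xs. f xs mod g xs)"
  using recursive_minus[OF assms(1) recursive_mult[OF assms(2) recursive_div[OF assms]]]
  by (simp add: minus_mult_div_eq_mod)

lemma decidable_pred_odd: "recursive n f \<Longrightarrow> decidable_pred n (\<lambda>xs. odd (f xs))"
  unfolding odd_iff_mod_2_eq_one by (intro decidable_pred_eq recursive_mod recursive_const)

lemma Least_eq_iff_all_less: "(LEAST k::nat. k = b \<or> \<not> P k) = b \<longleftrightarrow> (\<forall>k<b. P k)"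
proof
  assume "(LEAST k. k = b \<or> \<not> P k) = b"
  then show "\<forall>k<b. P k"
    by (metis Least_le leD)
next
  assume "\<forall>k<b. P k"
  then show "(LEAST k. k = b \<or> \<not> P k) = b"
    by (intro Least_equality) (auto simp: not_less[symmetric])
qed

lemma decidable_pred_ball:
  assumes "decidable_pred (Suc n) P" "recursive n b"
  shows "decidable_pred n (\<lambda>xs. \<forall>k<b xs. P (k # xs))"
proof -
  have "decidable_pred (Suc n) (\<lambda>ys. ys ! 0 = b (tl ys) \<or> \<not> P ys)"
    by (intro decidable_pred_disj decidable_pred_eq decidable_pred_not assms recursive_proj
        recursive_tl) simp
  then have "recursive n (\<lambda>xs. LEAST k. k = b xs \<or> \<not> P (k # xs))"
    using recursive_Least by fastforce
  then have "decidable_pred n (\<lambda>xs. (LEAST k. k = b xs \<or> \<not> P (k # xs)) = b xs)"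
    using assms(2) by (rule decidable_pred_eq)
  then show ?thesis
    by (rule decidable_pred_cong) (rule Least_eq_iff_all_less)
qed

lemma computable_iff_recursive: "computable h \<longleftrightarrow> recursive 1 (\<lambda>xs. h (xs ! 0))"
  unfolding computable_def recursive_def
  by (metis One_nat_def length_Cons length_Suc_conv list.size(3) nth_Cons_0 length_0_conv)

lemma decidable_set_iff_decidable_pred: "decidable_set A \<longleftrightarrow> decidable_pred 1 (\<lambda>xs. xs ! 0 \<in> A)"
  unfolding decidable_set_def decidable_pred_def computable_iff_recursive ..

lemma decidable_pred_mem:
  "decidable_set A \<Longrightarrow> recursive n f \<Longrightarrow> decidable_pred n (\<lambda>xs. f xs \<in> A)"
  unfolding decidable_set_iff_decidable_pred decidable_pred_def
  using recursive_comp1 by fastforce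

lemma recursive_table_lookup:
  "recursive n f \<Longrightarrow> recursive n (\<lambda>xs. if f xs < length t then t ! f xs else 0)"
proof (induction t arbitrary: f)
  case Nil
  then show ?case by (simp add: recursive_zero)
next
  case (Cons a t)
  have "recursive n (\<lambda>xs. if f xs = 0 then a
          else if f xs - 1 < length t then t ! (f xs - 1) else 0)"
    by (intro recursive_if Cons.IH decidable_pred_eq recursive_minus_1 Cons.prems recursive_const)
  then show ?case
    by (rule recursive_cong) (auto simp: nth_Cons')
qed

section \<open>Recursive coding of pairs and lists\<close>

lemma recursive_triangle: "recursive n f \<Longrightarrow> recursive n (\<lambda>xs. triangle (f xs))"
  unfolding triangle_def by (intro recursive_div recursive_mult recursive_Suc recursive_const)

lemma recursive_prod_encode:
  "recursive n f \<Longrightarrow> recursive n g \<Longrightarrow> recursive n (\<lambda>xs. prod_encode (f xs, g xs))"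
  unfolding prod_encode_def by (simp add: recursive_add recursive_triangle)

definition diagonal_index :: "nat \<Rightarrow> nat" where
  "diagonal_index m = (LEAST k. m < triangle (Suc k))"

lemma less_triangle_Suc: "m < triangle (Suc m)"
  by (induction m) auto

lemma triangle_diagonal_index:
  "triangle (diagonal_index m) \<le> m" "m < triangle (Suc (diagonal_index m))"
proof -
  show "m < triangle (Suc (diagonal_index m))"
    unfolding diagonal_index_def using less_triangle_Suc by (rule LeastI)
  show "triangle (diagonal_index m) \<le> m"
  proof (cases "diagonal_index m")
    case (Suc k)
    then have "\<not> m < triangle (Suc k)"
      unfolding diagonal_index_def by (metis lessI not_less_Least)
    then show ?thesis using Suc by simp
  qed simp
qed

lemma prod_decode_diagonal_index:
  fixes m :: nat
  defines "a \<equiv> m - triangle (diagonal_index m)"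
  shows "prod_decode m = (a, diagonal_index m - a)"
proof -
  have "prod_encode (a, diagonal_index m - a) = m"
    using triangle_diagonal_index[of m] by (simp add: a_def prod_encode_def)
  then show ?thesis by (metis prod_encode_inverse)
qed

lemma recursive_diagonal_index:
  assumes "recursive n f"
  shows "recursive n (\<lambda>xs. diagonal_index (f xs))"
proof -
  have "decidable_pred (Suc n) (\<lambda>ys. f (tl ys) < triangle (Suc (ys ! 0)))"
    by (intro decidable_pred_less recursive_triangle recursive_Suc recursive_proj
        recursive_tl assms) simp
  from recursive_Least[OF this] show ?thesis
    unfolding diagonal_index_def by (simp del: triangle_Suc) (use less_triangle_Suc in blast)
qed

lemma recursive_fst_prod_decode: "recursive n f \<Longrightarrow> recursive n (\<lambda>xs. fst (prod_decode (f xs)))"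
  by (simp add: prod_decode_diagonal_index recursive_minus recursive_triangle recursive_diagonal_index)

lemma recursive_snd_prod_decode: "recursive n f \<Longrightarrow> recursive n (\<lambda>xs. snd (prod_decode (f xs)))"
  by (simp add: prod_decode_diagonal_index recursive_minus recursive_triangle recursive_diagonal_index)

definition code_tl :: "nat \<Rightarrow> nat" where
  "code_tl l = (if l = 0 then 0 else snd (prod_decode (l - 1)))"

definition code_hd :: "nat \<Rightarrow> nat" where
  "code_hd l = fst (prod_decode (l - 1))"

definition code_drop :: "nat \<Rightarrow> nat \<Rightarrow> nat" where
  "code_drop k = code_tl ^^ k"

lemma list_decode_code_tl: "list_decode (code_tl l) = tl (list_decode l)"
  by (cases l) (auto simp: code_tl_def split: prod.split)

lemma code_hd_eq_hd_list_decode: "l \<noteq> 0 \<Longrightarrow> code_hd l = hd (list_decode l)"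
  by (cases l) (auto simp: code_hd_def split: prod.split)

lemma list_decode_code_drop: "list_decode (code_drop k l) = drop k (list_decode l)"
  by (induction k) (auto simp: code_drop_def list_decode_code_tl drop_Suc tl_drop)

lemma list_decode_eq_Nil_iff: "list_decode l = [] \<longleftrightarrow> l = 0"
  by (metis list_decode.simps(1) list_decode_inverse list_encode.simps(1))

lemma code_drop_eq_0_iff: "code_drop k l = 0 \<longleftrightarrow> length (list_decode l) \<le> k"
  using list_decode_code_drop[of k l] list_decode_eq_Nil_iff[of "code_drop k l"] by simp

lemma code_hd_code_drop: "k < length (list_decode l) \<Longrightarrow> code_hd (code_drop k l) = list_decode l ! k"
  by (simp add: code_hd_eq_hd_list_decode code_drop_eq_0_iff list_decode_code_drop hd_drop_conv_nth)

lemma length_le_list_encode: "length xs \<le> list_encode xs"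
  by (induction xs) (auto intro: order.trans[OF _ le_prod_encode_2])

lemma less_list_encode: "y \<in> set xs \<Longrightarrow> y < list_encode xs"
proof (induction xs)
  case (Cons a xs)
  then show ?case
    using le_prod_encode_1[of a "list_encode xs"] le_prod_encode_2[of "list_encode xs" a]
    by (auto simp: less_Suc_eq_le)
qed simp

lemma length_list_decode_le: "length (list_decode l) \<le> l"
  using length_le_list_encode[of "list_decode l"] by simp

lemma less_of_mem_list_decode: "y \<in> set (list_decode l) \<Longrightarrow> y < l"
  using less_list_encode[of y "list_decode l"] by simp

lemma set_list_decode_subset_iff:
  "set (list_decode l) \<subseteq> A \<longleftrightarrow> (\<forall>k<l. code_drop k l \<noteq> 0 \<longrightarrow> code_hd (code_drop k l) \<in> A)"
  using length_list_decode_le[of l]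
  by (auto simp: code_drop_eq_0_iff code_hd_code_drop in_set_conv_nth not_le subset_iff)

lemma recursive_code_tl: "recursive n f \<Longrightarrow> recursive n (\<lambda>xs. code_tl (f xs))"
  unfolding code_tl_def
  by (intro recursive_if decidable_pred_eq recursive_const recursive_snd_prod_decode recursive_minus_1)

lemma recursive_code_hd: "recursive n f \<Longrightarrow> recursive n (\<lambda>xs. code_hd (f xs))"
  unfolding code_hd_def by (intro recursive_fst_prod_decode recursive_minus_1)

lemma recursive_code_drop:
  assumes "recursive n f" "recursive n g"
  shows "recursive n (\<lambda>xs. code_drop (f xs) (g xs))"
proof -
  have "recursive 2 (\<lambda>xs. code_drop (xs ! 0) (xs ! 1))"
    by (rule recursive_prim_rec2[where h="\<lambda>a r y. code_tl r"])
       (auto simp: code_drop_def intro!: recursive_code_tl recursive_proj)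
  from recursive_comp2[OF this assms] show ?thesis by simp
qed

lemma recursive_length_list_decode:
  assumes "recursive n f"
  shows "recursive n (\<lambda>xs. length (list_decode (f xs)))"
proof -
  have "decidable_pred (Suc n) (\<lambda>ys. code_drop (ys ! 0) (f (tl ys)) = 0)"
    by (intro decidable_pred_eq recursive_code_drop recursive_proj recursive_tl assms
        recursive_const) simp
  from recursive_Least[OF this]
  have "recursive n (\<lambda>xs. LEAST k. code_drop k (f xs) = 0)"
    by (simp add: code_drop_eq_0_iff) (meson order_refl)
  then show ?thesis
    by (rule recursive_cong) (auto simp: code_drop_eq_0_iff intro!: Least_equality)
qed

lemma decidable_pred_subset_set_decode:
  assumes "recursive n f" "recursive n g"
  shows "decidable_pred n (\<lambda>xs. set (list_decode (f xs)) \<subseteq> set_decode (g xs))"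
proof -
  have "decidable_pred (Suc 2) (\<lambda>ys. code_drop (ys ! 0) (ys ! 1) \<noteq> 0
          \<longrightarrow> odd (ys ! 2 div 2 ^ code_hd (code_drop (ys ! 0) (ys ! 1))))"
    by (intro decidable_pred_imp decidable_pred_not decidable_pred_eq decidable_pred_odd
        recursive_code_drop recursive_code_hd recursive_div recursive_power recursive_proj
        recursive_const) simp_all
  from decidable_pred_ball[OF this recursive_proj[of 0 2]]
  have "decidable_pred 2 (\<lambda>xs. \<forall>k<xs ! 0. code_drop k (xs ! 0) \<noteq> 0
          \<longrightarrow> odd (xs ! 1 div 2 ^ code_hd (code_drop k (xs ! 0))))"
    by simp
  then have "decidable_pred 2 (\<lambda>xs. set (list_decode (xs ! 0)) \<subseteq> set_decode (xs ! 1))"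
    by (rule decidable_pred_cong) (simp add: set_list_decode_subset_iff set_decode_def)
  from recursive_comp2[OF this[unfolded decidable_pred_def] assms] show ?thesis
    unfolding decidable_pred_def by simp
qed

section \<open>Decidability of the codes of well-formed formulas\<close>

definition wf_codes :: "nat list \<Rightarrow> nat set" where
  "wf_codes ar = frm_code ` Frm ar"

lemma inj_frm_code: "inj frm_code"
proof (rule injI)
  show "frm_code \<phi> = frm_code \<psi> \<Longrightarrow> \<phi> = \<psi>" for \<phi> \<psi>
  proof (induction \<phi> arbitrary: \<psi>)
    case (Var i)
    then show ?case by (cases \<psi>) auto
  next
    case (App c fs)
    then show ?case
      by (cases \<psi>) (auto simp: list_encode_eq intro!: list.inj_map_strong[where f=frm_code and fa=frm_code])
  qed
qed

lemma prod_encode_0_in_wf_codes: "prod_encode (0, i) \<in> wf_codes ar"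
  unfolding wf_codes_def Frm_def by (rule image_eqI[of _ _ "Var i"]) auto

lemma prod_encode_Suc_in_wf_codes_iff:
  "prod_encode (Suc c, l) \<in> wf_codes ar \<longleftrightarrow>
     c < length ar \<and> length (list_decode l) = ar ! c \<and> set (list_decode l) \<subseteq> wf_codes ar"
proof
  assume "prod_encode (Suc c, l) \<in> wf_codes ar"
  then obtain \<phi> where "wf_frm ar \<phi>" "frm_code \<phi> = prod_encode (Suc c, l)"
    unfolding wf_codes_def Frm_def by auto
  then show "c < length ar \<and> length (list_decode l) = ar ! c \<and> set (list_decode l) \<subseteq> wf_codes ar"
    by (cases \<phi>) (auto simp: wf_codes_def Frm_def)
next
  assume wf: "c < length ar \<and> length (list_decode l) = ar ! c \<and> set (list_decode l) \<subseteq> wf_codes ar"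
  then have "list_decode l \<in> lists (frm_code ` Frm ar)"
    by (auto simp: wf_codes_def)
  then obtain fs where fs: "list_decode l = map frm_code fs" "set fs \<subseteq> Frm ar"
    unfolding lists_image by auto
  then have "App c fs \<in> Frm ar"
    using wf by (auto simp: Frm_def dest!: arg_cong[where f=length])
  moreover have "frm_code (App c fs) = prod_encode (Suc c, l)"
    using fs(1) by (metis frm_code.simps(2) list_decode_inverse)
  ultimately show "prod_encode (Suc c, l) \<in> wf_codes ar"
    unfolding wf_codes_def by (metis image_eqI)
qed

text \<open>Course-of-values step: \<open>H\<close> is the bit mask (\<^const>\<open>set_encode\<close>) of the well-formed
  codes below \<open>x\<close>, which include the codes of all immediate subformulas.\<close>

definition wf_code_step :: "nat list \<Rightarrow> nat \<Rightarrow> nat \<Rightarrow> bool" where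
  "wf_code_step ar H x \<longleftrightarrow> (case prod_decode x of
      (0, _) \<Rightarrow> True
    | (Suc c, l) \<Rightarrow> c < length ar \<and> length (list_decode l) = ar ! c \<and> set (list_decode l) \<subseteq> set_decode H)"

lemma wf_code_step_iff:
  assumes "\<forall>y<x. y \<in> set_decode H \<longleftrightarrow> y \<in> wf_codes ar"
  shows "wf_code_step ar H x \<longleftrightarrow> x \<in> wf_codes ar"
proof -
  obtain a l where x: "x = prod_encode (a, l)"
    by (metis prod_decode_inverse surj_pair)
  have "y < x" if "y \<in> set (list_decode l)" for y
    using less_of_mem_list_decode[OF that] le_prod_encode_2[of l a] x by simp
  then have "set (list_decode l) \<subseteq> set_decode H \<longleftrightarrow> set (list_decode l) \<subseteq> wf_codes ar"
    using assms by blast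
  then show ?thesis
    by (cases a) (simp_all add: wf_code_step_def x prod_encode_0_in_wf_codes
        prod_encode_Suc_in_wf_codes_iff)
qed

lemma decidable_pred_wf_code_step:
  assumes "recursive n h" "recursive n f"
  shows "decidable_pred n (\<lambda>xs. wf_code_step ar (h xs) (f xs))"
proof -
  have "decidable_pred n (\<lambda>xs. fst (prod_decode (f xs)) = 0 \<or>
          fst (prod_decode (f xs)) - 1 < length ar \<and>
          length (list_decode (snd (prod_decode (f xs)))) =
            (if fst (prod_decode (f xs)) - 1 < length ar then ar ! (fst (prod_decode (f xs)) - 1) else 0) \<and>
          set (list_decode (snd (prod_decode (f xs)))) \<subseteq> set_decode (h xs))"
    by (intro decidable_pred_disj decidable_pred_conj decidable_pred_eq decidable_pred_less
        decidable_pred_subset_set_decode recursive_length_list_decode recursive_table_lookup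
        recursive_fst_prod_decode recursive_snd_prod_decode recursive_minus_1 recursive_const assms)
  then show ?thesis
    by (rule decidable_pred_cong) (auto simp: wf_code_step_def split: prod.split nat.split)
qed

lemma recursive_set_encode_wf_codes:
  assumes "recursive n f"
  shows "recursive n (\<lambda>xs. set_encode (wf_codes ar \<inter> {..<f xs}))"
proof -
  let ?mask = "\<lambda>a. set_encode (wf_codes ar \<inter> {..<a})"
  have "?mask (Suc a) = ?mask a + 2 ^ a * (if wf_code_step ar (?mask a) a then 1 else 0)" for a
  proof -
    have "wf_code_step ar (?mask a) a \<longleftrightarrow> a \<in> wf_codes ar"
      by (rule wf_code_step_iff) simp
    then show ?thesis
      by (simp add: lessThan_Suc Int_insert_right)
  qed
  moreover have "recursive 2 (\<lambda>xs. xs ! 1 + 2 ^ xs ! 0 * (if wf_code_step ar (xs ! 1) (xs ! 0) then 1 else 0))"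
    using decidable_pred_wf_code_step[OF recursive_proj recursive_proj, of 1 2 0]
    by (intro recursive_add recursive_mult recursive_power recursive_proj recursive_const)
       (simp_all add: decidable_pred_def)
  ultimately have "recursive 1 (\<lambda>xs. ?mask (xs ! 0))"
    by (intro recursive_prim_rec1[where h="\<lambda>a r. r + 2 ^ a * (if wf_code_step ar r a then 1 else 0)"])
  from recursive_comp1[OF this assms] show ?thesis by simp
qed

lemma decidable_set_wf_codes: "decidable_set (wf_codes ar)"
proof -
  have "decidable_pred 1 (\<lambda>xs. wf_code_step ar (set_encode (wf_codes ar \<inter> {..<xs ! 0})) (xs ! 0))"
    by (intro decidable_pred_wf_code_step recursive_set_encode_wf_codes recursive_proj) simp_all
  then show ?thesis
    unfolding decidable_set_iff_decidable_pred
    by (rule decidable_pred_cong) (simp add: wf_code_step_iff)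
qed

section \<open>The approximating matrices\<close>

definition proper_value :: "nat list \<Rightarrow> nat \<Rightarrow> nat \<Rightarrow> bool" where
  "proper_value ar n x \<longleftrightarrow> x < n \<and> x \<in> wf_codes ar"

definition code_matrix :: "nat list \<Rightarrow> frm set \<Rightarrow> nat \<Rightarrow> fmatrix" where
  "code_matrix ar L n =
     \<lparr>nvals = Suc n,
      desig = {x. x < Suc n \<and> (proper_value ar n x \<longrightarrow> x \<in> frm_code ` L)},
      tfun = (\<lambda>c vs. if proper_value ar n (prod_encode (Suc c, list_encode vs))
                     then prod_encode (Suc c, list_encode vs) else n)\<rparr>"

definition frm_decode :: "nat list \<Rightarrow> nat \<Rightarrow> frm" where
  "frm_decode ar x = (if x \<in> wf_codes ar then inv_into (Frm ar) frm_code x else Var 0)"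

lemma frm_decode_in_Frm: "frm_decode ar x \<in> Frm ar"
  using inv_into_into[of x frm_code "Frm ar"] by (auto simp: frm_decode_def wf_codes_def Frm_def)

lemma frm_code_frm_decode: "x \<in> wf_codes ar \<Longrightarrow> frm_code (frm_decode ar x) = x"
  by (simp add: frm_decode_def wf_codes_def f_inv_into_f)

lemma proper_value_child:
  assumes "proper_value ar n (prod_encode (Suc c, l))" "y \<in> set (list_decode l)"
  shows "proper_value ar n y"
proof -
  have "y < prod_encode (Suc c, l)"
    using less_of_mem_list_decode[OF assms(2)] le_prod_encode_2[of l "Suc c"] by simp
  then show ?thesis
    using assms prod_encode_Suc_in_wf_codes_iff by (auto simp: proper_value_def)
qed

lemma val_code_matrix_le: "(\<forall>i. v i \<le> n) \<Longrightarrow> val (code_matrix ar L n) v \<phi> \<le> n"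
  by (cases \<phi>) (auto simp: code_matrix_def proper_value_def)

lemma val_code_matrix_proper:
  "proper_value ar n (val (code_matrix ar L n) v \<phi>)
    \<Longrightarrow> val (code_matrix ar L n) v \<phi> = frm_code (subst (frm_decode ar \<circ> v) \<phi>)"
proof (induction \<phi>)
  case (Var i)
  then show ?case by (simp add: proper_value_def frm_code_frm_decode)
next
  case (App c fs)
  let ?M = "code_matrix ar L n"
  let ?x = "prod_encode (Suc c, list_encode (map (val ?M v) fs))"
  have proper: "proper_value ar n ?x" and val: "val ?M v (App c fs) = ?x"
    using App.prems by (auto simp: code_matrix_def proper_value_def split: if_splits)
  have "val ?M v f = frm_code (subst (frm_decode ar \<circ> v) f)" if "f \<in> set fs" for f
    using that proper by (intro App.IH) (auto intro: proper_value_child)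
  then show ?case
    unfolding val by (simp add: comp_def cong: map_cong)
qed

text \<open>The cap \<open>min _ n\<close> only makes the valuation range over the truth values; the variables
  occurring in \<open>\<phi>\<close> have codes below \<open>n\<close>.\<close>

lemma val_code_matrix_self:
  assumes "wf_frm ar \<phi>" "frm_code \<phi> < n"
  shows "val (code_matrix ar L n) (\<lambda>i. min (frm_code (Var i)) n) \<phi> = frm_code \<phi>"
  using assms
proof (induction \<phi>)
  case (App c fs)
  have "frm_code f < frm_code (App c fs)" if "f \<in> set fs" for f
    using less_list_encode[of "frm_code f" "map frm_code fs"] that
      le_prod_encode_2[of "list_encode (map frm_code fs)" "Suc c"] by simp
  then have "val (code_matrix ar L n) (\<lambda>i. min (frm_code (Var i)) n) f = frm_code f"
    if "f \<in> set fs" for f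
    using App.IH[OF that] App.prems that by (meson less_trans wf_frm.simps(2))
  then have "map (val (code_matrix ar L n) (\<lambda>i. min (frm_code (Var i)) n)) fs = map frm_code fs"
    by simp
  moreover have "frm_code (App c fs) \<in> wf_codes ar"
    using App.prems(1) unfolding wf_codes_def Frm_def by (intro imageI) simp
  ultimately show ?case
    using App.prems(2) by (simp only: val.simps) (simp add: code_matrix_def proper_value_def)
qed simp

lemma val_code_matrix_mono:
  assumes "m \<le> n" "proper_value ar m (val (code_matrix ar L m) v \<phi>)"
  shows "val (code_matrix ar L n) v \<phi> = val (code_matrix ar L m) v \<phi>"
  using assms(2)
proof (induction \<phi>)
  case (App c fs)
  let ?x = "prod_encode (Suc c, list_encode (map (val (code_matrix ar L m) v) fs))"
  have proper: "proper_value ar m ?x"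
    using App.prems by (auto simp: code_matrix_def proper_value_def split: if_splits)
  have "val (code_matrix ar L n) v f = val (code_matrix ar L m) v f" if "f \<in> set fs" for f
    using that proper by (intro App.IH) (auto intro: proper_value_child)
  moreover have "proper_value ar n ?x"
    using proper assms(1) by (simp add: proper_value_def)
  ultimately show ?case
    using proper by (simp add: code_matrix_def cong: map_cong)
qed simp

lemma mem_Taut_code_matrix_iff:
  "\<phi> \<in> Taut ar (code_matrix ar L n) \<longleftrightarrow> \<phi> \<in> Frm ar \<and>
     (\<forall>v. (\<forall>i. v i \<le> n) \<longrightarrow> proper_value ar n (val (code_matrix ar L n) v \<phi>)
        \<longrightarrow> val (code_matrix ar L n) v \<phi> \<in> frm_code ` L)"
  using val_code_matrix_le[of _ n ar L \<phi>]
  by (auto simp: Taut_def code_matrix_def less_Suc_eq_le)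

lemma is_matrix_code_matrix: "is_matrix ar (code_matrix ar L n)"
  by (auto simp: is_matrix_def code_matrix_def proper_value_def)

lemma Taut_code_matrix_antimono:
  assumes "m \<le> n"
  shows "Taut ar (code_matrix ar L n) \<subseteq> Taut ar (code_matrix ar L m)"
proof
  fix \<phi> assume \<phi>: "\<phi> \<in> Taut ar (code_matrix ar L n)"
  have "val (code_matrix ar L m) v \<phi> \<in> frm_code ` L"
    if "\<forall>i. v i \<le> m" and proper: "proper_value ar m (val (code_matrix ar L m) v \<phi>)" for v
  proof -
    have "val (code_matrix ar L n) v \<phi> = val (code_matrix ar L m) v \<phi>"
      using assms proper by (rule val_code_matrix_mono)
    moreover have "\<forall>i. v i \<le> n" and "proper_value ar n (val (code_matrix ar L m) v \<phi>)"
      using that assms by (auto simp: proper_value_def intro: le_trans)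
    ultimately show ?thesis
      using \<phi> unfolding mem_Taut_code_matrix_iff by metis
  qed
  then show "\<phi> \<in> Taut ar (code_matrix ar L m)"
    using \<phi> unfolding mem_Taut_code_matrix_iff by simp
qed

lemma logic_subset_Taut_code_matrix:
  assumes "is_logic ar L"
  shows "L \<subseteq> Taut ar (code_matrix ar L n)"
proof
  fix \<phi> assume "\<phi> \<in> L"
  then have "subst (frm_decode ar \<circ> v) \<phi> \<in> L" for v
    using assms frm_decode_in_Frm by (simp add: is_logic_def)
  moreover have "\<phi> \<in> Frm ar"
    using assms \<open>\<phi> \<in> L\<close> by (auto simp: is_logic_def)
  ultimately show "\<phi> \<in> Taut ar (code_matrix ar L n)"
    unfolding mem_Taut_code_matrix_iff by (auto dest: val_code_matrix_proper)
qed

lemma Inter_Taut_code_matrix_subset: "(\<Inter>n. Taut ar (code_matrix ar L n)) \<subseteq> L"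
proof
  fix \<phi> assume taut: "\<phi> \<in> (\<Inter>n. Taut ar (code_matrix ar L n))"
  define n where "n = Suc (frm_code \<phi>)"
  define v where "v i = min (frm_code (Var i)) n" for i
  have wf: "wf_frm ar \<phi>"
    using taut by (auto simp: Taut_def Frm_def)
  then have "val (code_matrix ar L n) v \<phi> = frm_code \<phi>"
    unfolding v_def n_def by (intro val_code_matrix_self) simp_all
  moreover have "proper_value ar n (frm_code \<phi>)"
    using wf by (auto simp: proper_value_def n_def wf_codes_def Frm_def)
  moreover have "\<forall>i. v i \<le> n"
    by (simp add: v_def)
  moreover have "\<phi> \<in> Taut ar (code_matrix ar L n)"
    using taut by blast
  ultimately have "frm_code \<phi> \<in> frm_code ` L"
    unfolding mem_Taut_code_matrix_iff by metis
  then show "\<phi> \<in> L"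
    using inj_frm_code by (simp add: inj_image_mem_iff)
qed

lemma seq_approx_code_matrix: "is_logic ar L \<Longrightarrow> seq_approx ar L (code_matrix ar L)"
  unfolding seq_approx_def
  using is_matrix_code_matrix Taut_code_matrix_antimono logic_subset_Taut_code_matrix
    Inter_Taut_code_matrix_subset
  by (simp add: INT_greatest subset_antisym)

lemma effective_seq_code_matrix:
  assumes "decidable_logic L"
  shows "effective_seq ar (code_matrix ar L)"
proof -
  let ?M = "code_matrix ar L"
  have "computable (\<lambda>i. nvals (?M i))"
    by (simp add: computable_iff_recursive code_matrix_def recursive_Suc recursive_proj)
  moreover have "decidable_pred 1 (\<lambda>xs. snd (prod_decode (xs ! 0)) < Suc (fst (prod_decode (xs ! 0))) \<and>
      (snd (prod_decode (xs ! 0)) < fst (prod_decode (xs ! 0)) \<and> snd (prod_decode (xs ! 0)) \<in> wf_codes ar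
       \<longrightarrow> snd (prod_decode (xs ! 0)) \<in> frm_code ` L))"
    using assms unfolding decidable_logic_def
    by (intro decidable_pred_conj decidable_pred_imp decidable_pred_less decidable_pred_mem
        decidable_set_wf_codes recursive_fst_prod_decode recursive_snd_prod_decode recursive_Suc
        recursive_proj) simp_all
  then have "computable (\<lambda>p. if snd (prod_decode p) \<in> desig (?M (fst (prod_decode p))) then 1 else 0)"
    by (simp add: computable_iff_recursive decidable_pred_def code_matrix_def proper_value_def)
  moreover
  define app where "app p = prod_encode (Suc (fst (prod_decode p)), snd (prod_decode p))" for p
  define g where "g p = (if proper_value ar (fst (prod_decode p)) (app (snd (prod_decode p)))
      then app (snd (prod_decode p)) else fst (prod_decode p))" for p
  have "recursive 1 (\<lambda>xs. g (xs ! 0))"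
    unfolding g_def app_def proper_value_def
    by (intro recursive_if decidable_pred_conj decidable_pred_less decidable_pred_mem
        decidable_set_wf_codes recursive_prod_encode recursive_Suc recursive_fst_prod_decode
        recursive_snd_prod_decode recursive_proj) simp_all
  then have "computable g"
    by (simp add: computable_iff_recursive)
  moreover have "g (prod_encode (i, prod_encode (c, list_encode vs))) = tfun (?M i) c vs" for i c vs
    by (simp add: g_def app_def code_matrix_def)
  ultimately show ?thesis
    unfolding effective_seq_def by blast
qed

theorem corollary2:
  fixes ar :: "nat list" and L :: "frm set"
  assumes "is_logic ar L"
    and "decidable_logic L"
  shows "\<exists>Ms. seq_approx ar L Ms \<and> effective_seq ar Ms"
  using seq_approx_code_matrix[OF assms(1)] effective_seq_code_matrix[OF assms(2)] by blast

end
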